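(* Let $S$ be a specialisation independent scheduling rule, $G$ and $X$ p-goals, $\gamma$ a substitution and $\underline\tau$ a shifting such that $G\gamma\underline{\tau}+X$ is defined. Suppose there are p-SLD derivations $G\xrightarrow{S,E}Q$ (1) and $G\gamma\underline{\tau}+X\xrightarrow{S,D}R$ (2) via $S$ with $D/(G\gamma\underline{\tau})=E$. Then there exist a substitution $\sigma$ and a shifting $\underline{\rho}$ such that $R/(G\gamma\underline{\tau})=Q\sigma\underline{\rho}$; moreover, $\sigma$ is a renaming if $\gamma$ is a renaming and $D/X$ is empty.
   Context: A p-atom is a pair $a[p]$ of an atom $a$ and a rational priority $p$. A p-goal is a finite set of p-atoms with pairwise distinct priorities, regarded as a list ordered by increasing priority. Substitutions act on atoms and leave priorities unchanged. A clause is $h\leftarrow B$ with $h$ an atom and $B$ a p-goal. For p-goals with no common priority, $F+G=F\cup G$ (merging); $F|G$ denotes $F+G$ when all priorities of $F$ are smaller than those of $G$. A shifting $\underline{\pi}$ is a strictly increasing bijection $\mathbb{Q}\to\mathbb{Q}$ acting on priorities ($G\underline\pi$). Priority derivation step: for a p-goal $a|F$ ($a$ of least priority), clause $c=(h\leftarrow B)$, renaming $\xi$ with $var(a|F)\cap var(c\xi)=\emptyset$, idempotent relevant mgu $\theta$ of $a$ and $h\xi$, and shifting $\underline{\pi}$ with $F$, $B\xi\underline{\pi}$ sharing no priority: $a|F\xrightarrow{c\xi,\theta}(F+B\xi\underline{\pi})\theta$. A p-SLD derivation is a sequence of such steps with each renamed clause $c_j\xi_j$ variable-disjoint from the initial goal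 and all earlier renamed clauses; its template is the sequence of applied clauses. Specialisation/lowering: for $c=(h\leftarrow B)$, a step $a\lambda\underline{\sigma}|(K\lambda\underline{\sigma}+X)\xrightarrow{c}(X+K\lambda\underline{\sigma}+B\xi''\underline{\theta}'')\alpha''$ is a lowering by $X$ of a step $a|K\xrightarrow{c}(K+B\xi'\underline{\theta}')\alpha'$ ($\lambda$ a substitution, $\underline\sigma$ a shifting); it is a congruent lowering by $X$ if some shifting $\underline{\rho}$ has $K\underline{\rho}=K\underline{\sigma}$ and $B\underline{\theta}'\underline{\rho}=B\underline{\theta}''$. Steps are (congruent) lowerings of each other if each is a (congruent) lowering of the other. A set $S$ of steps is complete if (i) whenever some step $G\xrightarrow{c}\cdot$ exists, some step $G\xrightarrow{c}\cdot$ lies in $S$, and (ii) $S$ contains every step that is a congruent lowering of each other with a step of $S$. $S$ is specialisation independent if whenever $Ds_1,Ds_2\in S$ and $Ds_2$ is a lowering of $Ds_1$ by $X$, $Ds_2$ is a congruent lowering of $Ds_1$ by $X$. A specialisation independent scheduling rule is a complete specialisation independent set of steps. $G\xrightarrow{S,M}R$ denotes a p-SLD derivation with template $M$ all of whose steps lie in $S$. Sub-resolvents and sub-templates: for a step $a|(F+G)\xrightarrow{c}Q=((F+G)+B\xi\underline{\pi})\alpha$, set $Q/a=B\xi\underline{\pi}\alpha$, $Q/F=F\alpha$, $Q/(a|F)=Q/a+Q/F$, $c/a=c$, $c/F=$ empty, $c/(a|F)=c$. For a derivation $F+G\xrightarrow{c}Q\xrightarrow{K}R$, recursively $R/F=R/(Q/F)$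 and $(c|K)/F=(c/F)|(K/(Q/F))$ (for the empty derivation, $R/F=F$ and the sub-template is empty). Thus $R/F$ is the set of p-atoms of $R$ descending from $F$ and $D/F$ is the subsequence of the template $D$ of clauses applied to p-atoms descending from $F$. *)

theory Defs
  imports Complex_Main
begin

datatype ('f,'v) trm = Var 'v | Fn 'f "('f,'v) trm list"

datatype ('f,'v) atom = Atom 'f "('f,'v) trm list"

type_synonym ('f,'v) subst = "'v \<Rightarrow> ('f,'v) trm"

fun subst_t :: "('f,'v) subst \<Rightarrow> ('f,'v) trm \<Rightarrow> ('f,'v) trm" where
  "subst_t \<sigma> (Var x) = \<sigma> x"
| "subst_t \<sigma> (Fn f ts) = Fn f (map (subst_t \<sigma>) ts)"

fun subst_a :: "('f,'v) subst \<Rightarrow> ('f,'v) atom \<Rightarrow> ('f,'v) atom" where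
  "subst_a \<sigma> (Atom p ts) = Atom p (map (subst_t \<sigma>) ts)"

fun vars_t :: "('f,'v) trm \<Rightarrow> 'v set" where
  "vars_t (Var x) = {x}"
| "vars_t (Fn f ts) = \<Union> (set (map vars_t ts))"

fun vars_a :: "('f,'v) atom \<Rightarrow> 'v set" where
  "vars_a (Atom p ts) = \<Union> (set (map vars_t ts))"

text \<open>Composition: first \<sigma>, then \<theta> (so that t(\<sigma>\<theta>) = (t\<sigma>)\<theta>).\<close>
definition scomp :: "('f,'v) subst \<Rightarrow> ('f,'v) subst \<Rightarrow> ('f,'v) subst" where
  "scomp \<sigma> \<theta> = (\<lambda>x. subst_t \<theta> (\<sigma> x))"

definition sdom :: "('f,'v) subst \<Rightarrow> 'v set" where
  "sdom \<sigma> = {x. \<sigma> x \<noteq> Var x}"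

definition svran :: "('f,'v) subst \<Rightarrow> 'v set" where
  "svran \<sigma> = (\<Union>x\<in>sdom \<sigma>. vars_t (\<sigma> x))"

definition renaming :: "('f,'v) subst \<Rightarrow> bool" where
  "renaming \<sigma> \<longleftrightarrow> (\<exists>f. bij f \<and> \<sigma> = (\<lambda>x. Var (f x)))"

definition unifier :: "('f,'v) subst \<Rightarrow> ('f,'v) atom \<Rightarrow> ('f,'v) atom \<Rightarrow> bool" where
  "unifier \<theta> a b \<longleftrightarrow> subst_a \<theta> a = subst_a \<theta> b"

definition is_mgu :: "('f,'v) subst \<Rightarrow> ('f,'v) atom \<Rightarrow> ('f,'v) atom \<Rightarrow> bool" where
  "is_mgu \<theta> a b \<longleftrightarrow> unifier \<theta> a b \<and>
     (\<forall>u. unifier u a b \<longrightarrow> (\<exists>\<delta>. u = scomp \<theta> \<delta>))"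

definition idempotent :: "('f,'v) subst \<Rightarrow> bool" where
  "idempotent \<theta> \<longleftrightarrow> scomp \<theta> \<theta> = \<theta>"

definition relevant_mgu :: "('f,'v) subst \<Rightarrow> ('f,'v) atom \<Rightarrow> ('f,'v) atom \<Rightarrow> bool" where
  "relevant_mgu \<theta> a b \<longleftrightarrow> is_mgu \<theta> a b \<and> sdom \<theta> \<union> svran \<theta> \<subseteq> vars_a a \<union> vars_a b"

type_synonym ('f,'v) patom = "('f,'v) atom \<times> rat"
type_synonym ('f,'v) pgoal = "('f,'v) patom set"

definition prios :: "('f,'v) pgoal \<Rightarrow> rat set" where
  "prios G = snd ` G"

definition pgoal :: "('f,'v) pgoal \<Rightarrow> bool" where
  "pgoal G \<longleftrightarrow> finite G \<and> inj_on snd G"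

definition gsubst :: "('f,'v) pgoal \<Rightarrow> ('f,'v) subst \<Rightarrow> ('f,'v) pgoal" (infixl "\<cdot>\<^sub>s" 70) where
  "G \<cdot>\<^sub>s \<sigma> = (\<lambda>(a,p). (subst_a \<sigma> a, p)) ` G"

definition gshift :: "('f,'v) pgoal \<Rightarrow> (rat \<Rightarrow> rat) \<Rightarrow> ('f,'v) pgoal" (infixl "\<cdot>\<^sub>p" 70) where
  "G \<cdot>\<^sub>p \<pi> = (\<lambda>(a,p). (a, \<pi> p)) ` G"

definition shifting :: "(rat \<Rightarrow> rat) \<Rightarrow> bool" where
  "shifting \<pi> \<longleftrightarrow> strict_mono \<pi> \<and> bij \<pi>"

definition vars_g :: "('f,'v) pgoal \<Rightarrow> 'v set" where
  "vars_g G = (\<Union>x\<in>G. vars_a (fst x))"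

definition sel :: "('f,'v) pgoal \<Rightarrow> ('f,'v) patom" where
  "sel G = (THE x. x \<in> G \<and> (\<forall>y\<in>G. y \<noteq> x \<longrightarrow> snd x < snd y))"

text \<open>A clause h \<leftarrow> B: head atom and body p-goal.\<close>
type_synonym ('f,'v) clause = "('f,'v) atom \<times> ('f,'v) pgoal"

definition csubst :: "('f,'v) clause \<Rightarrow> ('f,'v) subst \<Rightarrow> ('f,'v) clause" where
  "csubst c \<xi> = (subst_a \<xi> (fst c), snd c \<cdot>\<^sub>s \<xi>)"

definition vars_c :: "('f,'v) clause \<Rightarrow> 'v set" where
  "vars_c c = vars_a (fst c) \<union> vars_g (snd c)"

text \<open>A step  G --(c\<xi>,\<theta>)--> (F + B\<xi>\<pi>)\<theta>  is recorded by its data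
  (goal G, clause c, renaming \<xi>, mgu \<theta>, shifting \<pi>).\<close>
record ('f,'v) step =
  sgoal :: "('f,'v) pgoal"
  sclause :: "('f,'v) clause"
  sren :: "('f,'v) subst"
  smgu :: "('f,'v) subst"
  sshift :: "rat \<Rightarrow> rat"

definition valid_step :: "('f,'v) step \<Rightarrow> bool" where
  "valid_step s \<longleftrightarrow>
     (let G = sgoal s; c = sclause s; \<xi> = sren s; \<theta> = smgu s; \<pi> = sshift s in
      pgoal G \<and> G \<noteq> {} \<and> pgoal (snd c) \<and> renaming \<xi> \<and>
      vars_g G \<inter> vars_c (csubst c \<xi>) = {} \<and>
      idempotent \<theta> \<and> relevant_mgu \<theta> (fst (sel G)) (subst_a \<xi> (fst c)) \<and>
      shifting \<pi> \<and> prios (G - {sel G}) \<inter> prios (snd c \<cdot>\<^sub>s \<xi> \<cdot>\<^sub>p \<pi>) = {})"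

definition result :: "('f,'v) step \<Rightarrow> ('f,'v) pgoal" where
  "result s = ((sgoal s - {sel (sgoal s)}) \<union> (snd (sclause s) \<cdot>\<^sub>s sren s \<cdot>\<^sub>p sshift s)) \<cdot>\<^sub>s smgu s"

text \<open>s2 is a lowering by X of s1: s1 = (a|K --c--> ...), s2 = (a\<lambda>\<sigma> | (K\<lambda>\<sigma> + X) --c--> ...).\<close>
definition lowering_cond ::
  "('f,'v) pgoal \<Rightarrow> ('f,'v) step \<Rightarrow> ('f,'v) step \<Rightarrow> ('f,'v) subst \<Rightarrow> (rat \<Rightarrow> rat) \<Rightarrow> bool" where
  "lowering_cond X s1 s2 lam \<sigma> \<longleftrightarrow>
     valid_step s1 \<and> valid_step s2 \<and> sclause s1 = sclause s2 \<and> shifting \<sigma> \<and>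
     prios (sgoal s1 \<cdot>\<^sub>s lam \<cdot>\<^sub>p \<sigma>) \<inter> prios X = {} \<and>
     sgoal s2 = sgoal s1 \<cdot>\<^sub>s lam \<cdot>\<^sub>p \<sigma> \<union> X \<and>
     sel (sgoal s2) = (subst_a lam (fst (sel (sgoal s1))), \<sigma> (snd (sel (sgoal s1))))"

definition lowering :: "('f,'v) pgoal \<Rightarrow> ('f,'v) step \<Rightarrow> ('f,'v) step \<Rightarrow> bool" where
  "lowering X s1 s2 \<longleftrightarrow> (\<exists>lam \<sigma>. lowering_cond X s1 s2 lam \<sigma>)"

definition cong_lowering :: "('f,'v) pgoal \<Rightarrow> ('f,'v) step \<Rightarrow> ('f,'v) step \<Rightarrow> bool" where
  "cong_lowering X s1 s2 \<longleftrightarrow> (\<exists>lam \<sigma> \<rho>. lowering_cond X s1 s2 lam \<sigma> \<and> shifting \<rho> \<and>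
     (sgoal s1 - {sel (sgoal s1)}) \<cdot>\<^sub>p \<rho> = (sgoal s1 - {sel (sgoal s1)}) \<cdot>\<^sub>p \<sigma> \<and>
     snd (sclause s1) \<cdot>\<^sub>p sshift s1 \<cdot>\<^sub>p \<rho> = snd (sclause s1) \<cdot>\<^sub>p sshift s2)"

definition cong_lowerings_each_other :: "('f,'v) step \<Rightarrow> ('f,'v) step \<Rightarrow> bool" where
  "cong_lowerings_each_other s1 s2 \<longleftrightarrow>
     (\<exists>X. cong_lowering X s1 s2) \<and> (\<exists>Y. cong_lowering Y s2 s1)"

definition complete :: "('f,'v) step set \<Rightarrow> bool" where
  "complete S \<longleftrightarrow> S \<subseteq> {s. valid_step s} \<and>
     (\<forall>G c. (\<exists>s. valid_step s \<and> sgoal s = G \<and> sclause s = c) \<longrightarrow>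
            (\<exists>s\<in>S. sgoal s = G \<and> sclause s = c)) \<and>
     (\<forall>s1\<in>S. \<forall>s2. valid_step s2 \<and> cong_lowerings_each_other s1 s2 \<longrightarrow> s2 \<in> S)"

definition spec_indep :: "('f,'v) step set \<Rightarrow> bool" where
  "spec_indep S \<longleftrightarrow> (\<forall>s1\<in>S. \<forall>s2\<in>S. \<forall>X. lowering X s1 s2 \<longrightarrow> cong_lowering X s1 s2)"

definition sis_rule :: "('f,'v) step set \<Rightarrow> bool" where
  "sis_rule S \<longleftrightarrow> complete S \<and> spec_indep S"

fun chain :: "('f,'v) pgoal \<Rightarrow> ('f,'v) step list \<Rightarrow> ('f,'v) pgoal \<Rightarrow> bool" where
  "chain G [] R \<longleftrightarrow> R = G"
| "chain G (s # ss) R \<longleftrightarrow> valid_step s \<and> sgoal s = G \<and> chain (result s) ss R"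

definition rclause :: "('f,'v) step \<Rightarrow> ('f,'v) clause" where
  "rclause s = csubst (sclause s) (sren s)"

text \<open>p-SLD derivation G --(S,M)--> R given by the step list ds.\<close>
definition pderiv :: "('f,'v) step set \<Rightarrow> ('f,'v) pgoal \<Rightarrow> ('f,'v) step list \<Rightarrow>
    ('f,'v) clause list \<Rightarrow> ('f,'v) pgoal \<Rightarrow> bool" where
  "pderiv S G ds M R \<longleftrightarrow> chain G ds R \<and> set ds \<subseteq> S \<and> map sclause ds = M \<and>
     (\<forall>i<length ds. vars_c (rclause (ds ! i)) \<inter> vars_g G = {} \<and>
        (\<forall>j<i. vars_c (rclause (ds ! i)) \<inter> vars_c (rclause (ds ! j)) = {}))"

definition step_sub :: "('f,'v) step \<Rightarrow> ('f,'v) pgoal \<Rightarrow> ('f,'v) pgoal" where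
  "step_sub s F = ((F - {sel (sgoal s)}) \<cdot>\<^sub>s smgu s) \<union>
     (if sel (sgoal s) \<in> F then snd (sclause s) \<cdot>\<^sub>s sren s \<cdot>\<^sub>p sshift s \<cdot>\<^sub>s smgu s else {})"

fun subres :: "('f,'v) step list \<Rightarrow> ('f,'v) pgoal \<Rightarrow> ('f,'v) pgoal" where
  "subres [] F = F"
| "subres (s # ss) F = subres ss (step_sub s F)"

fun subtempl :: "('f,'v) step list \<Rightarrow> ('f,'v) pgoal \<Rightarrow> ('f,'v) clause list" where
  "subtempl [] F = []"
| "subtempl (s # ss) F = (if sel (sgoal s) \<in> F then [sclause s] else []) @ subtempl ss (step_sub s F)"

end

theory Submission
  imports Defs
begin

(*
  Induction along D, with the invariant that the descendants of G\<gamma>\<tau> form an instance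
  Q'\<sigma>\<rho> of the current resolvent Q' of E.  A step of D selecting a descendant of X only
  applies its mgu to the descendants of G\<gamma>\<tau>, which is absorbed into \<sigma>.  A step selecting
  a descendant of G\<gamma>\<tau> is a lowering, by the descendants of X, of the corresponding step of E.
  Specialisation independence makes it a congruent lowering, so a single shifting carries
  both the untouched atoms and the new body of the E-step onto those of the D-step.  The
  mgu of the D-step is an instance of the mgu of the E-step, and even a renaming of it when
  \<sigma> is a renaming, since relevant mgus of variant pairs are variants.  If D/X is empty,
  only steps of the second kind occur and \<sigma> stays a renaming.
*)

section \<open>Substitutions and p-goals\<close>

lemma subst_t_comp: "subst_t \<theta> (subst_t \<sigma> t) = subst_t (scomp \<sigma> \<theta>) t"
  by (induction t) (auto simp: scomp_def)

lemma subst_a_comp: "subst_a \<theta> (subst_a \<sigma> a) = subst_a (scomp \<sigma> \<theta>) a"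
  by (cases a) (auto simp: subst_t_comp)

lemma scomp_assoc: "scomp (scomp \<sigma> \<theta>) \<eta> = scomp \<sigma> (scomp \<theta> \<eta>)"
  by (auto simp: scomp_def subst_t_comp)

lemma scomp_Var_left [simp]: "scomp Var \<sigma> = \<sigma>"
  by (simp add: scomp_def)

lemma subst_t_Var [simp]: "subst_t Var t = t"
  by (induction t) (auto simp: map_idI)

lemma subst_a_Var [simp]: "subst_a Var a = a"
  by (cases a) (auto simp: map_idI)

lemma scomp_Var_right [simp]: "scomp \<sigma> Var = \<sigma>"
  by (simp add: scomp_def)

lemma subst_t_cong: "(\<And>x. x \<in> vars_t t \<Longrightarrow> \<sigma> x = \<tau> x) \<Longrightarrow> subst_t \<sigma> t = subst_t \<tau> t"
  by (induction t) auto

lemma subst_a_cong: "(\<And>x. x \<in> vars_a a \<Longrightarrow> \<sigma> x = \<tau> x) \<Longrightarrow> subst_a \<sigma> a = subst_a \<tau> a"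
  by (cases a) (auto intro: subst_t_cong)

lemma vars_t_subst: "vars_t (subst_t \<sigma> t) = (\<Union>x\<in>vars_t t. vars_t (\<sigma> x))"
  by (induction t) auto

lemma vars_a_subst: "vars_a (subst_a \<sigma> a) = (\<Union>x\<in>vars_a a. vars_t (\<sigma> x))"
  by (cases a) (auto simp: vars_t_subst)

lemma finite_vars_t [simp]: "finite (vars_t t)"
  by (induction t) auto

lemma finite_vars_a [simp]: "finite (vars_a a)"
  by (cases a) auto

lemma subst_t_eq_VarD: "subst_t \<sigma> t = Var y \<Longrightarrow> \<exists>z. t = Var z"
  by (cases t) auto

lemma subst_t_fixes_vars: "subst_t \<sigma> t = t \<Longrightarrow> y \<in> vars_t t \<Longrightarrow> \<sigma> y = Var y"
proof (induction t)
  case (Fn f ts)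
  then obtain t where "t \<in> set ts" "y \<in> vars_t t"
    by auto
  moreover have "map (subst_t \<sigma>) ts = map id ts"
    using Fn.prems(1) by simp
  ultimately show ?case
    using Fn.IH by (metis id_apply map_eq_conv)
qed simp

lemma relevant_mgu_vars:
  assumes "relevant_mgu \<theta> a b" "x \<in> vars_a a \<union> vars_a b"
  shows "vars_t (\<theta> x) \<subseteq> vars_a a \<union> vars_a b"
  using assms unfolding relevant_mgu_def svran_def sdom_def by (cases "\<theta> x = Var x") auto

lemma relevant_mgu_outside:
  assumes "relevant_mgu \<theta> a b" "x \<notin> vars_a a \<union> vars_a b"
  shows "\<theta> x = Var x"
  using assms unfolding relevant_mgu_def sdom_def by auto

lemma gsubst_comp: "G \<cdot>\<^sub>s \<sigma> \<cdot>\<^sub>s \<theta> = G \<cdot>\<^sub>s scomp \<sigma> \<theta>"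
  unfolding gsubst_def image_image by (rule image_cong) (auto simp: subst_a_comp)

lemma gsubst_gshift: "G \<cdot>\<^sub>p \<pi> \<cdot>\<^sub>s \<sigma> = G \<cdot>\<^sub>s \<sigma> \<cdot>\<^sub>p \<pi>"
  unfolding gshift_def gsubst_def image_image by (rule image_cong) auto

lemma gsubst_gshift_eq_image: "G \<cdot>\<^sub>s \<sigma> \<cdot>\<^sub>p \<rho> = (\<lambda>(a, p). (subst_a \<sigma> a, \<rho> p)) ` G"
  unfolding gsubst_def gshift_def image_image by (rule image_cong) auto

lemma gsubst_Un: "(A \<union> B) \<cdot>\<^sub>s \<sigma> = A \<cdot>\<^sub>s \<sigma> \<union> B \<cdot>\<^sub>s \<sigma>"
  unfolding gsubst_def by auto

lemma gsubst_empty [simp]: "{} \<cdot>\<^sub>s \<sigma> = {}"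
  unfolding gsubst_def by simp

lemma gshift_Un: "(A \<union> B) \<cdot>\<^sub>p \<pi> = A \<cdot>\<^sub>p \<pi> \<union> B \<cdot>\<^sub>p \<pi>"
  unfolding gshift_def by auto

lemma gsubst_cong: "(\<And>x. x \<in> vars_g G \<Longrightarrow> \<sigma> x = \<tau> x) \<Longrightarrow> G \<cdot>\<^sub>s \<sigma> = G \<cdot>\<^sub>s \<tau>"
  unfolding gsubst_def vars_g_def by (rule image_cong) (force intro!: subst_a_cong)+

lemma gshift_cong: "(\<And>p. p \<in> prios G \<Longrightarrow> \<pi> p = \<pi>' p) \<Longrightarrow> G \<cdot>\<^sub>p \<pi> = G \<cdot>\<^sub>p \<pi>'"
  unfolding gshift_def prios_def by (rule image_cong) force+

lemma prios_gsubst [simp]: "prios (G \<cdot>\<^sub>s \<sigma>) = prios G"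
  unfolding prios_def gsubst_def by (force simp: image_image)

lemma prios_gshift [simp]: "prios (G \<cdot>\<^sub>p \<pi>) = \<pi> ` prios G"
  unfolding prios_def gshift_def by (force simp: image_image)

lemma prios_Un [simp]: "prios (A \<union> B) = prios A \<union> prios B"
  unfolding prios_def by auto

lemma prios_empty [simp]: "prios {} = {}"
  unfolding prios_def by simp

lemma prios_mono: "A \<subseteq> B \<Longrightarrow> prios A \<subseteq> prios B"
  unfolding prios_def by auto

lemma vars_g_gshift [simp]: "vars_g (G \<cdot>\<^sub>p \<pi>) = vars_g G"
  unfolding vars_g_def gshift_def by force

lemma vars_g_gsubst: "vars_g (G \<cdot>\<^sub>s \<sigma>) = (\<Union>x\<in>vars_g G. vars_t (\<sigma> x))"
  unfolding vars_g_def gsubst_def by (force simp: vars_a_subst)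

lemma vars_g_Un [simp]: "vars_g (A \<union> B) = vars_g A \<union> vars_g B"
  unfolding vars_g_def by auto

lemma vars_g_mono: "A \<subseteq> B \<Longrightarrow> vars_g A \<subseteq> vars_g B"
  unfolding vars_g_def by auto

lemma finite_vars_g: "finite G \<Longrightarrow> finite (vars_g G)"
  unfolding vars_g_def by auto

lemma vars_c_rename: "vars_c (csubst c (\<lambda>x. Var (f x))) = f ` vars_c c"
  unfolding vars_c_def csubst_def by (auto simp: vars_a_subst vars_g_gsubst)

lemma disjoint_prios_Un_cancel:
  assumes "A \<union> Y = A' \<union> Y" "prios A \<inter> prios Y = {}" "prios A' \<inter> prios Y = {}"
  shows "A = A'"
  using assms unfolding prios_def by blast

lemma sel_eqI:
  assumes "x \<in> G" "\<forall>y\<in>G. y \<noteq> x \<longrightarrow> snd x < snd y"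
  shows "sel G = x"
  unfolding sel_def
proof (rule the_equality)
  fix z assume "z \<in> G \<and> (\<forall>y\<in>G. y \<noteq> z \<longrightarrow> snd z < snd y)"
  then show "z = x"
    using assms by force
qed (use assms in auto)

lemma sel_least:
  assumes "pgoal G" "G \<noteq> {}"
  shows "sel G \<in> G" "\<forall>y\<in>G. y \<noteq> sel G \<longrightarrow> snd (sel G) < snd y"
proof -
  have fin: "finite (snd ` G)" and inj: "inj_on snd G"
    using assms(1) unfolding pgoal_def by auto
  obtain x where x: "x \<in> G" "snd x = Min (snd ` G)"
    using Min_in[OF fin] assms(2) by fastforce
  have least: "\<forall>y\<in>G. y \<noteq> x \<longrightarrow> snd x < snd y"
  proof (intro ballI impI)
    fix y assume that: "y \<in> G" "y \<noteq> x"
    have "snd x \<le> snd y"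
      using x(2) fin that(1) by simp
    moreover have "snd x \<noteq> snd y"
      using inj_onD[OF inj _ x(1) that(1)] that(2) by metis
    ultimately show "snd x < snd y"
      by simp
  qed
  then show "sel G \<in> G" "\<forall>y\<in>G. y \<noteq> sel G \<longrightarrow> snd (sel G) < snd y"
    using sel_eqI[OF x(1) least] x(1) by simp_all
qed

lemma sel_subset:
  assumes "pgoal H" "A \<subseteq> H" "sel H \<in> A"
  shows "sel A = sel H"
  using assms sel_least[of H] by (intro sel_eqI) auto

lemma sel_gsubst_gshift:
  assumes "pgoal G" "G \<noteq> {}" "strict_mono \<rho>"
  shows "sel (G \<cdot>\<^sub>s \<sigma> \<cdot>\<^sub>p \<rho>) = (subst_a \<sigma> (fst (sel G)), \<rho> (snd (sel G)))"
proof (rule sel_eqI)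
  note least = sel_least[OF assms(1,2)]
  then show "(subst_a \<sigma> (fst (sel G)), \<rho> (snd (sel G))) \<in> G \<cdot>\<^sub>s \<sigma> \<cdot>\<^sub>p \<rho>"
    by (force simp: gsubst_gshift_eq_image)
  show "\<forall>y\<in>G \<cdot>\<^sub>s \<sigma> \<cdot>\<^sub>p \<rho>. y \<noteq> (subst_a \<sigma> (fst (sel G)), \<rho> (snd (sel G))) \<longrightarrow>
      snd (subst_a \<sigma> (fst (sel G)), \<rho> (snd (sel G))) < snd y"
    unfolding gsubst_gshift_eq_image
  proof (intro ballI impI, elim imageE)
    fix y x
    assume "x \<in> G" "y = (case x of (a, p) \<Rightarrow> (subst_a \<sigma> a, \<rho> p))"
      and "y \<noteq> (subst_a \<sigma> (fst (sel G)), \<rho> (snd (sel G)))"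
    then have "x \<noteq> sel G"
      by (auto simp: case_prod_beta)
    then have "snd (sel G) < snd x"
      using least \<open>x \<in> G\<close> by blast
    then show "snd (subst_a \<sigma> (fst (sel G)), \<rho> (snd (sel G))) < snd y"
      using \<open>y = _\<close> assms(3) by (cases x) (auto simp: strict_mono_less)
  qed
qed

lemma sel_Un_gsubst_gshift:
  assumes "pgoal (G \<cdot>\<^sub>s \<sigma> \<cdot>\<^sub>p \<rho> \<union> Y)" "sel (G \<cdot>\<^sub>s \<sigma> \<cdot>\<^sub>p \<rho> \<union> Y) \<in> G \<cdot>\<^sub>s \<sigma> \<cdot>\<^sub>p \<rho>"
    and "pgoal G" "G \<noteq> {}" "strict_mono \<rho>"
  shows "sel (G \<cdot>\<^sub>s \<sigma> \<cdot>\<^sub>p \<rho> \<union> Y) = (subst_a \<sigma> (fst (sel G)), \<rho> (snd (sel G)))"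
proof -
  have "sel (G \<cdot>\<^sub>s \<sigma> \<cdot>\<^sub>p \<rho> \<union> Y) = sel (G \<cdot>\<^sub>s \<sigma> \<cdot>\<^sub>p \<rho>)"
    using sel_subset[OF assms(1) _ assms(2)] by simp
  then show ?thesis
    using sel_gsubst_gshift[OF assms(3-5)] by simp
qed

lemma gsubst_gshift_Diff:
  assumes "pgoal G" "strict_mono \<rho>" "(a, p) \<in> G"
  shows "(G - {(a, p)}) \<cdot>\<^sub>s \<sigma> \<cdot>\<^sub>p \<rho> = G \<cdot>\<^sub>s \<sigma> \<cdot>\<^sub>p \<rho> - {(subst_a \<sigma> a, \<rho> p)}"
  using assms unfolding gsubst_gshift_eq_image pgoal_def
  by (force simp: strict_mono_eq inj_on_def)

section \<open>Relevant mgus of variant pairs\<close>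

lemma finite_inj_on_extend_bij:
  fixes f :: "'a \<Rightarrow> 'a"
  assumes "finite F" "inj_on f F"
  obtains h where "bij h" "\<And>x. x \<in> F \<Longrightarrow> h x = f x"
proof -
  define Enter where "Enter = f ` F - F"
  define Leave where "Leave = F - f ` F"
  have "card Enter = card Leave"
    using assms card_image[OF assms(2)] unfolding Enter_def Leave_def
    by (metis Int_commute card_Diff_subset_Int finite_Int)
  moreover have "finite Enter" "finite Leave"
    using assms unfolding Enter_def Leave_def by auto
  ultimately obtain k where k: "bij_betw k Enter Leave"
    by (metis finite_same_card_bij)
  define Rest where "Rest = - (F \<union> f ` F)"
  (* h maps the points entering the image bijectively onto the points leaving it. *)
  define h where "h x = (if x \<in> F then f x else if x \<in> Enter then k x else x)" for x
  have "bij_betw h F (f ` F)"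
    using assms(2) by (auto simp: bij_betw_def h_def inj_on_def)
  moreover have "bij_betw h Enter Leave"
    using k by (rule bij_betw_cong[THEN iffD1, rotated]) (auto simp: h_def Enter_def)
  ultimately have "bij_betw h (F \<union> Enter) (f ` F \<union> Leave)"
    by (rule bij_betw_combine) (auto simp: Leave_def)
  moreover have "bij_betw h Rest Rest"
    by (auto simp: bij_betw_def h_def inj_on_def Rest_def Enter_def)
  ultimately have "bij_betw h ((F \<union> Enter) \<union> Rest) ((f ` F \<union> Leave) \<union> Rest)"
    by (rule bij_betw_combine) (auto simp: Leave_def Rest_def)
  moreover have "(F \<union> Enter) \<union> Rest = UNIV" "(f ` F \<union> Leave) \<union> Rest = UNIV"
    by (auto simp: Enter_def Leave_def Rest_def)
  ultimately show ?thesis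
    using that by (simp add: h_def)
qed

lemma is_mgu_instance:
  assumes "is_mgu \<theta> a b" "unifier \<theta>' (subst_a u a) (subst_a u b)"
  obtains \<delta> where "scomp \<theta> \<delta> = scomp u \<theta>'"
  using assms unfolding is_mgu_def unifier_def by (metis subst_a_comp)

lemma mutual_instances_rename_range_vars:
  assumes "scomp \<theta> \<alpha> = \<theta>'" "scomp \<theta>' \<beta> = \<theta>"
  obtains m where "inj_on m (\<Union>x. vars_t (\<theta> x))" "\<And>x y. y \<in> vars_t (\<theta> x) \<Longrightarrow> \<alpha> y = Var (m y)"
proof -
  have \<alpha>\<beta>: "subst_t \<beta> (\<alpha> y) = Var y" if "y \<in> vars_t (\<theta> x)" for x y
  proof -
    have "subst_t (scomp \<alpha> \<beta>) (\<theta> x) = \<theta> x"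
      using assms by (metis scomp_assoc scomp_def)
    then show ?thesis
      using subst_t_fixes_vars that by (fastforce simp: scomp_def)
  qed
  define m where "m y = (case \<alpha> y of Var z \<Rightarrow> z | Fn _ _ \<Rightarrow> y)" for y
  have m: "\<alpha> y = Var (m y)" if "y \<in> vars_t (\<theta> x)" for x y
    using subst_t_eq_VarD[OF \<alpha>\<beta>[OF that]] by (auto simp: m_def)
  have "inj_on m (\<Union>x. vars_t (\<theta> x))"
  proof (rule inj_onI)
    fix y y' assume "y \<in> (\<Union>x. vars_t (\<theta> x))" "y' \<in> (\<Union>x. vars_t (\<theta> x))" "m y = m y'"
    then obtain x x' where y: "y \<in> vars_t (\<theta> x)" and y': "y' \<in> vars_t (\<theta> x')"
      by blast
    have "Var y = subst_t \<beta> (\<alpha> y')"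
      using \<alpha>\<beta>[OF y] m[OF y] m[OF y'] \<open>m y = m y'\<close> by simp
    then show "y = y'"
      using \<alpha>\<beta>[OF y'] by simp
  qed
  then show ?thesis
    using that m by blast
qed

lemma is_mgu_bij_rename_mutual_instances:
  fixes g :: "'v \<Rightarrow> 'v" and \<theta>1 \<theta>2 :: "('f,'v) subst"
  assumes g: "bij g" and m1: "is_mgu \<theta>1 a b"
    and m2: "is_mgu \<theta>2 (subst_a (\<lambda>x. Var (g x)) a) (subst_a (\<lambda>x. Var (g x)) b)"
  obtains \<alpha> \<beta> where "scomp \<theta>1 \<alpha> = (\<lambda>x. \<theta>2 (g x))" "scomp (\<lambda>x. \<theta>2 (g x)) \<beta> = \<theta>1"
proof -
  define w :: "('f,'v) subst" where "w = (\<lambda>x. Var (g x))"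
  define v :: "('f,'v) subst" where "v = (\<lambda>x. Var (inv g x))"
  have wv: "scomp w v = Var"
    using g unfolding w_def v_def scomp_def by (simp add: bij_is_inj)
  have w\<theta>2: "scomp w \<theta>2 = (\<lambda>x. \<theta>2 (g x))"
    unfolding w_def scomp_def by simp
  have "unifier \<theta>2 (subst_a w a) (subst_a w b)"
    using m2 unfolding is_mgu_def w_def by simp
  then obtain \<alpha> where \<alpha>: "scomp \<theta>1 \<alpha> = scomp w \<theta>2"
    by (rule is_mgu_instance[OF m1])
  have "unifier (scomp \<theta>1 w) a b"
    using m1 unfolding is_mgu_def unifier_def by (simp add: subst_a_comp[symmetric])
  then have "unifier (scomp \<theta>1 w) (subst_a v (subst_a w a)) (subst_a v (subst_a w b))"
    by (simp add: subst_a_comp wv)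
  then obtain \<beta> where \<beta>: "scomp \<theta>2 \<beta> = scomp v (scomp \<theta>1 w)"
    by (rule is_mgu_instance[OF m2[folded w_def]])
  have "scomp (scomp w \<theta>2) (scomp \<beta> v) = scomp w (scomp (scomp \<theta>2 \<beta>) v)"
    by (simp only: scomp_assoc)
  also have "\<dots> = scomp (scomp w v) (scomp \<theta>1 (scomp w v))"
    by (simp only: \<beta> scomp_assoc)
  finally have "scomp (scomp w \<theta>2) (scomp \<beta> v) = \<theta>1"
    by (simp add: wv)
  then show ?thesis
    using that \<alpha> w\<theta>2 by metis
qed

lemma inj_on_if_Un:
  assumes "inj_on f A" "inj_on g B" "A \<inter> B = {}" "f ` A \<inter> g ` B = {}"
  shows "inj_on (\<lambda>x. if x \<in> A then f x else g x) (A \<union> B)"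
proof -
  define h where "h x = (if x \<in> A then f x else g x)" for x
  have "A - B = A" "B - A = B"
    using assms(3) by auto
  moreover have "h ` A = f ` A" "h ` B = g ` B"
    using assms(3) unfolding h_def by (auto intro!: image_cong)
  moreover have "inj_on h A = inj_on f A" "inj_on h B = inj_on g B"
    using assms(3) unfolding h_def by (auto intro!: inj_on_cong)
  ultimately have "inj_on h (A \<union> B)"
    using assms unfolding inj_on_Un by simp
  then show ?thesis
    unfolding h_def .
qed

lemma finite_inj_on_extend_renaming:
  assumes "finite D" "inj_on f D"
  obtains \<delta> :: "('f,'v) subst" where "renaming \<delta>" "\<And>x. x \<in> D \<Longrightarrow> \<delta> x = Var (f x)"
proof -
  obtain h where "bij h" "\<And>x. x \<in> D \<Longrightarrow> h x = f x"
    using finite_inj_on_extend_bij[OF assms] by blast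
  then show ?thesis
    using that unfolding renaming_def by force
qed

lemma relevant_mgu_bij_rename_range:
  fixes g :: "'v \<Rightarrow> 'v" and \<theta>1 \<theta>2 :: "('f,'v) subst" and a b :: "('f,'v) atom"
  defines "A \<equiv> vars_a a \<union> vars_a b"
  assumes g: "bij g" and r1: "relevant_mgu \<theta>1 a b"
    and r2: "relevant_mgu \<theta>2 (subst_a (\<lambda>x. Var (g x)) a) (subst_a (\<lambda>x. Var (g x)) b)"
  obtains m where "inj_on m (\<Union>x\<in>A. vars_t (\<theta>1 x))" "m ` (\<Union>x\<in>A. vars_t (\<theta>1 x)) \<subseteq> g ` A"
    "\<And>x. x \<in> A \<Longrightarrow> \<theta>2 (g x) = subst_t (\<lambda>y. Var (m y)) (\<theta>1 x)"
proof -
  obtain \<alpha> \<beta> where \<alpha>: "scomp \<theta>1 \<alpha> = (\<lambda>x. \<theta>2 (g x))" and \<beta>: "scomp (\<lambda>x. \<theta>2 (g x)) \<beta> = \<theta>1"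
    using is_mgu_bij_rename_mutual_instances[OF g] r1 r2 unfolding relevant_mgu_def by metis
  obtain m where inj: "inj_on m (\<Union>x. vars_t (\<theta>1 x))"
    and m: "\<And>x y. y \<in> vars_t (\<theta>1 x) \<Longrightarrow> \<alpha> y = Var (m y)"
    using mutual_instances_rename_range_vars[OF \<alpha> \<beta>] by blast
  have \<theta>2_m: "\<theta>2 (g x) = subst_t (\<lambda>y. Var (m y)) (\<theta>1 x)" for x
  proof -
    have "\<theta>2 (g x) = subst_t \<alpha> (\<theta>1 x)"
      using fun_cong[OF \<alpha>, of x] by (simp add: scomp_def)
    also have "\<dots> = subst_t (\<lambda>y. Var (m y)) (\<theta>1 x)"
      using m by (intro subst_t_cong) blast
    finally show ?thesis .
  qed
  have "vars_a (subst_a (\<lambda>x. Var (g x)) a) \<union> vars_a (subst_a (\<lambda>x. Var (g x)) b) = g ` A"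
    unfolding A_def by (auto simp: vars_a_subst)
  then have "m ` (\<Union>x\<in>A. vars_t (\<theta>1 x)) \<subseteq> g ` A"
    using relevant_mgu_vars[OF r2] \<theta>2_m by (fastforce simp: vars_t_subst)
  moreover have "inj_on m (\<Union>x\<in>A. vars_t (\<theta>1 x))"
    using inj by (rule inj_on_subset) blast
  ultimately show ?thesis
    using that \<theta>2_m by blast
qed

lemma relevant_mgu_bij_rename:
  fixes g :: "'v \<Rightarrow> 'v" and \<theta>1 \<theta>2 :: "('f,'v) subst"
  assumes g: "bij g" and r1: "relevant_mgu \<theta>1 a b"
    and r2: "relevant_mgu \<theta>2 (subst_a (\<lambda>x. Var (g x)) a) (subst_a (\<lambda>x. Var (g x)) b)"
    and "finite V"
  obtains \<delta> where "renaming \<delta>" "\<forall>x\<in>V. subst_t \<delta> (\<theta>1 x) = \<theta>2 (g x)"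
proof -
  define A where "A = vars_a a \<union> vars_a b"
  define W where "W = (\<Union>x\<in>A. vars_t (\<theta>1 x))"
  obtain m where "inj_on m W" "m ` W \<subseteq> g ` A"
    and \<theta>2_m: "\<And>x. x \<in> A \<Longrightarrow> \<theta>2 (g x) = subst_t (\<lambda>y. Var (m y)) (\<theta>1 x)"
    using relevant_mgu_bij_rename_range[OF g r1 r2] unfolding A_def W_def by blast
  (* Relevance makes both mgus the identity outside A and keeps the range of \<theta>1 on A inside A. *)
  have "W \<subseteq> A"
    unfolding W_def A_def using relevant_mgu_vars[OF r1] by blast
  have "g ` A \<inter> g ` (V - A) = {}"
    using bij_is_inj[OF g] by (auto dest: injD)
  then have "m ` W \<inter> g ` (V - A) = {}"
    using \<open>m ` W \<subseteq> g ` A\<close> by blast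
  then have inj: "inj_on (\<lambda>y. if y \<in> W then m y else g y) (W \<union> (V - A))"
    using \<open>W \<subseteq> A\<close> \<open>inj_on m W\<close> inj_on_subset[OF bij_is_inj[OF g]]
    by (intro inj_on_if_Un) auto
  have fin: "finite (W \<union> (V - A))"
    using \<open>finite V\<close> \<open>W \<subseteq> A\<close> unfolding A_def by (simp add: finite_subset)
  obtain \<delta> :: "('f,'v) subst" where "renaming \<delta>"
    and \<delta>: "\<And>y. y \<in> W \<union> (V - A) \<Longrightarrow> \<delta> y = Var (if y \<in> W then m y else g y)"
    using finite_inj_on_extend_renaming[OF fin inj] by blast
  have "subst_t \<delta> (\<theta>1 x) = \<theta>2 (g x)" if "x \<in> V" for x
  proof (cases "x \<in> A")
    case True
    then have "vars_t (\<theta>1 x) \<subseteq> W"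
      unfolding W_def by blast
    then have "subst_t \<delta> (\<theta>1 x) = subst_t (\<lambda>y. Var (m y)) (\<theta>1 x)"
      using \<delta> by (intro subst_t_cong) (simp add: subset_iff)
    then show ?thesis
      using \<theta>2_m True by simp
  next
    case False
    then have "\<theta>2 (g x) = Var (g x)"
      using relevant_mgu_outside[OF r2] bij_is_inj[OF g] by (auto simp: A_def vars_a_subst dest: injD)
    then show ?thesis
      using False \<open>W \<subseteq> A\<close> that \<delta> relevant_mgu_outside[OF r1] by (auto simp: A_def)
  qed
  then show ?thesis
    using that \<open>renaming \<delta>\<close> by blast
qed

lemma relevant_mgu_instance:
  assumes r1: "relevant_mgu \<theta>1 a b" and r2: "relevant_mgu \<theta>2 (subst_a u a) (subst_a u b)"
    and "finite V" "vars_a a \<union> vars_a b \<subseteq> V"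
  shows "\<exists>\<delta>. (\<forall>x\<in>V. subst_t \<delta> (\<theta>1 x) = subst_t \<theta>2 (u x)) \<and>
    ((\<exists>m. inj_on m V \<and> (\<forall>x\<in>V. u x = Var (m x))) \<longrightarrow> renaming \<delta>)"
proof (cases "\<exists>m. inj_on m V \<and> (\<forall>x\<in>V. u x = Var (m x))")
  case True
  then obtain m where "inj_on m V" "\<forall>x\<in>V. u x = Var (m x)"
    by blast
  moreover obtain g where g: "bij g" "\<And>x. x \<in> V \<Longrightarrow> g x = m x"
    using finite_inj_on_extend_bij \<open>finite V\<close> \<open>inj_on m V\<close> by blast
  ultimately have u_g: "\<And>x. x \<in> V \<Longrightarrow> u x = Var (g x)"
    by simp
  then have "subst_a u a = subst_a (\<lambda>x. Var (g x)) a" "subst_a u b = subst_a (\<lambda>x. Var (g x)) b"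
    using assms(4) by (auto intro!: subst_a_cong)
  then obtain \<delta> where "renaming \<delta>" "\<forall>x\<in>V. subst_t \<delta> (\<theta>1 x) = \<theta>2 (g x)"
    using relevant_mgu_bij_rename[OF g(1) r1 _ \<open>finite V\<close>] r2 by metis
  then show ?thesis
    using u_g by auto
next
  case False
  have "unifier \<theta>2 (subst_a u a) (subst_a u b)"
    using r2 unfolding relevant_mgu_def is_mgu_def by simp
  then obtain \<delta> where "scomp \<theta>1 \<delta> = scomp u \<theta>2"
    using is_mgu_instance r1 unfolding relevant_mgu_def by metis
  then have "\<forall>x. subst_t \<delta> (\<theta>1 x) = subst_t \<theta>2 (u x)"
    unfolding scomp_def by metis
  then show ?thesis
    using False by blast
qed

section \<open>Congruent lowerings of a step\<close>

lemma valid_stepD: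
  assumes "valid_step s"
  shows "pgoal (sgoal s)" "sgoal s \<noteq> {}" "pgoal (snd (sclause s))" "renaming (sren s)"
    "vars_g (sgoal s) \<inter> vars_c (csubst (sclause s) (sren s)) = {}"
    "relevant_mgu (smgu s) (fst (sel (sgoal s))) (subst_a (sren s) (fst (sclause s)))"
    "shifting (sshift s)"
    "prios (sgoal s - {sel (sgoal s)}) \<inter> prios (snd (sclause s) \<cdot>\<^sub>s sren s \<cdot>\<^sub>p sshift s) = {}"
  using assms unfolding valid_step_def Let_def by auto

lemma sis_rule_valid_step: "sis_rule S \<Longrightarrow> s \<in> S \<Longrightarrow> valid_step s"
  unfolding sis_rule_def complete_def by auto

lemma step_sub_selected:
  assumes "sel (sgoal s) = (subst_a \<sigma> a, \<rho> p)" "(a, p) \<in> G" "pgoal G" "strict_mono \<rho>"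
  shows "step_sub s (G \<cdot>\<^sub>s \<sigma> \<cdot>\<^sub>p \<rho>) = (G - {(a, p)}) \<cdot>\<^sub>s \<sigma> \<cdot>\<^sub>p \<rho> \<cdot>\<^sub>s smgu s \<union>
    snd (sclause s) \<cdot>\<^sub>s sren s \<cdot>\<^sub>p sshift s \<cdot>\<^sub>s smgu s"
proof -
  have "sel (sgoal s) \<in> G \<cdot>\<^sub>s \<sigma> \<cdot>\<^sub>p \<rho>"
    using assms(1,2) by (force simp: gsubst_gshift_eq_image)
  then show ?thesis
    using gsubst_gshift_Diff[OF assms(3,4,2)] assms(1) unfolding step_sub_def by simp
qed

lemma valid_step_renaming_apart:
  assumes "valid_step s"
  obtains f where "bij f" "sren s = (\<lambda>x. Var (f x))" "vars_g (sgoal s) \<inter> f ` vars_c (sclause s) = {}"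
proof -
  obtain f where "bij f" "sren s = (\<lambda>x. Var (f x))"
    using valid_stepD(4)[OF assms] unfolding renaming_def by blast
  then show ?thesis
    using that valid_stepD(5)[OF assms] vars_c_rename by metis
qed

lemma strict_mono_image_eq_imp_eq:
  fixes f g :: "'a::linorder \<Rightarrow> 'b::linorder"
  assumes "finite P" "strict_mono f" "strict_mono g" "f ` P = g ` P" "p \<in> P"
  shows "f p = g p"
proof -
  (* Both maps preserve the rank of a point within P, and a point of P is determined by its rank. *)
  have rank_image: "card {y\<in>h ` P. y < h q} = card {x\<in>P. x < q}" if "strict_mono h" for h q
  proof -
    have "{y\<in>h ` P. y < h q} = h ` {x\<in>P. x < q}"
      using that by (auto simp: strict_mono_less)
    moreover have "inj_on h {x\<in>P. x < q}"
      using strict_mono_imp_inj_on[OF that] by (auto simp: inj_on_def)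
    ultimately show ?thesis
      by (simp add: card_image)
  qed
  have rank_strict: "card {x\<in>P. x < q} < card {x\<in>P. x < q'}" if "q \<in> P" "q < q'" for q q'
    using that assms(1) by (intro psubset_card_mono) auto
  obtain q where q: "q \<in> P" "f p = g q"
    using assms(4,5) by (metis imageE imageI)
  have same_rank: "card {x\<in>P. x < p} = card {x\<in>P. x < q}"
    using rank_image[OF assms(2), of p] rank_image[OF assms(3), of q] q(2) assms(4) by simp
  have "p = q"
  proof (rule linorder_cases[of p q])
    assume "p < q"
    then show "p = q"
      using rank_strict[OF assms(5) \<open>p < q\<close>] same_rank by simp
  next
    assume "q < p"
    then show "p = q"
      using rank_strict[OF q(1) \<open>q < p\<close>] same_rank by simp
  qed
  then show ?thesis
    using q by simp
qed

lemma spec_indep_lowering_shift: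
  assumes "spec_indep S" "s1 \<in> S" "s2 \<in> S" "lowering_cond X s1 s2 lam \<sigma>"
  obtains \<rho> where "shifting \<rho>"
    "(sgoal s1 - {sel (sgoal s1)}) \<cdot>\<^sub>p \<rho> = (sgoal s1 - {sel (sgoal s1)}) \<cdot>\<^sub>p \<sigma>"
    "snd (sclause s1) \<cdot>\<^sub>p sshift s1 \<cdot>\<^sub>p \<rho> = snd (sclause s1) \<cdot>\<^sub>p sshift s2"
proof -
  have "cong_lowering X s1 s2"
    using assms unfolding spec_indep_def lowering_def by blast
  then obtain lam' \<sigma>' \<rho> where low': "lowering_cond X s1 s2 lam' \<sigma>'" and "shifting \<rho>"
    and K: "(sgoal s1 - {sel (sgoal s1)}) \<cdot>\<^sub>p \<rho> = (sgoal s1 - {sel (sgoal s1)}) \<cdot>\<^sub>p \<sigma>'"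
    and B: "snd (sclause s1) \<cdot>\<^sub>p sshift s1 \<cdot>\<^sub>p \<rho> = snd (sclause s1) \<cdot>\<^sub>p sshift s2"
    unfolding cong_lowering_def by blast
  have "sgoal s1 \<cdot>\<^sub>s lam' \<cdot>\<^sub>p \<sigma>' = sgoal s1 \<cdot>\<^sub>s lam \<cdot>\<^sub>p \<sigma>"
    using low' assms(4) disjoint_prios_Un_cancel unfolding lowering_cond_def by metis
  then have "\<sigma>' ` prios (sgoal s1) = \<sigma> ` prios (sgoal s1)"
    by (metis prios_gshift prios_gsubst)
  moreover have "finite (prios (sgoal s1))"
    using low' valid_stepD(1) unfolding lowering_cond_def pgoal_def prios_def by blast
  moreover have "strict_mono \<sigma>'" "strict_mono \<sigma>"
    using low' assms(4) unfolding lowering_cond_def shifting_def by auto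
  ultimately have "\<sigma>' p = \<sigma> p" if "p \<in> prios (sgoal s1)" for p
    using strict_mono_image_eq_imp_eq that by metis
  then have "(sgoal s1 - {sel (sgoal s1)}) \<cdot>\<^sub>p \<sigma>' = (sgoal s1 - {sel (sgoal s1)}) \<cdot>\<^sub>p \<sigma>"
    using prios_mono[of "sgoal s1 - {sel (sgoal s1)}" "sgoal s1"] by (intro gshift_cong) auto
  then show ?thesis
    using that \<open>shifting \<rho>\<close> K B by simp
qed

lemma subst_merge_renamed_copy:
  fixes \<sigma> :: "('f,'v) subst"
  assumes f1: "bij f1" and f2: "bij f2" and disj: "VG \<inter> f1 ` Vc = {}"
    and u_def: "\<And>x. u x = (if x \<in> f1 ` Vc then Var (f2 (inv f1 x)) else \<sigma> x)"
  shows "\<And>x. x \<in> VG \<Longrightarrow> u x = \<sigma> x"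
    and "\<And>y. y \<in> Vc \<Longrightarrow> u (f1 y) = Var (f2 y)"
    and "renaming \<sigma> \<Longrightarrow> (\<Union>x\<in>VG. vars_t (\<sigma> x)) \<inter> f2 ` Vc = {} \<Longrightarrow>
      \<exists>m. inj_on m (VG \<union> f1 ` Vc) \<and> (\<forall>x\<in>VG \<union> f1 ` Vc. u x = Var (m x))"
proof -
  show "u x = \<sigma> x" if "x \<in> VG" for x
    using that disj unfolding u_def by auto
  show "u (f1 y) = Var (f2 y)" if "y \<in> Vc" for y
    using that bij_is_inj[OF f1] unfolding u_def by simp
  show "\<exists>m. inj_on m (VG \<union> f1 ` Vc) \<and> (\<forall>x\<in>VG \<union> f1 ` Vc. u x = Var (m x))"
    if "renaming \<sigma>" and disj2: "(\<Union>x\<in>VG. vars_t (\<sigma> x)) \<inter> f2 ` Vc = {}"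
  proof -
    obtain g where g: "bij g" "\<sigma> = (\<lambda>x. Var (g x))"
      using \<open>renaming \<sigma>\<close> unfolding renaming_def by blast
    have "inj (f2 \<circ> inv f1)"
      using bij_is_inj[OF f2] bij_is_inj[OF bij_imp_bij_inv[OF f1]] by (rule inj_compose)
    then have inj_clause: "inj_on (\<lambda>x. f2 (inv f1 x)) (f1 ` Vc)"
      unfolding comp_def by (rule inj_on_subset) simp
    have "(\<lambda>x. f2 (inv f1 x)) ` f1 ` Vc = f2 ` Vc"
      using bij_is_inj[OF f1] by (simp add: image_image)
    moreover have "g ` VG \<subseteq> (\<Union>x\<in>VG. vars_t (\<sigma> x))"
      unfolding g(2) by auto
    ultimately have disj_images: "(\<lambda>x. f2 (inv f1 x)) ` f1 ` Vc \<inter> g ` VG = {}"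
      using disj2 by blast
    define m where "m x = (if x \<in> f1 ` Vc then f2 (inv f1 x) else g x)" for x
    have "inj_on m (f1 ` Vc \<union> VG)"
      unfolding m_def using inj_clause inj_on_subset[OF bij_is_inj[OF g(1)]] disj disj_images
      by (intro inj_on_if_Un) auto
    moreover have "u x = Var (m x)" for x
      unfolding u_def m_def g(2) by simp
    ultimately show "\<exists>m. inj_on m (VG \<union> f1 ` Vc) \<and> (\<forall>x\<in>VG \<union> f1 ` Vc. u x = Var (m x))"
      by (intro exI[of _ m]) (simp add: Un_commute)
  qed
qed

lemma step_mgu_instance:
  assumes v1: "valid_step s1" and v2: "valid_step s2" and cl: "sclause s1 = sclause s2"
    and sel2: "fst (sel (sgoal s2)) = subst_a \<sigma> (fst (sel (sgoal s1)))"
    and vars2: "vars_g (sgoal s1 \<cdot>\<^sub>s \<sigma>) \<subseteq> vars_g (sgoal s2)"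
  obtains \<delta> where
    "\<forall>x\<in>vars_g (sgoal s1). subst_t \<delta> (smgu s1 x) = subst_t (smgu s2) (\<sigma> x)"
    "snd (sclause s1) \<cdot>\<^sub>s sren s1 \<cdot>\<^sub>s smgu s1 \<cdot>\<^sub>s \<delta> = snd (sclause s1) \<cdot>\<^sub>s sren s2 \<cdot>\<^sub>s smgu s2"
    "renaming \<sigma> \<Longrightarrow> renaming \<delta>"
proof -
  obtain hd B where c1: "sclause s1 = (hd, B)"
    by (cases "sclause s1")
  define VG where "VG = vars_g (sgoal s1)"
  define Vc where "Vc = vars_c (hd, B)"
  obtain f1 where f1: "bij f1" "sren s1 = (\<lambda>x. Var (f1 x))" and disj1: "VG \<inter> f1 ` Vc = {}"
    using valid_step_renaming_apart[OF v1] unfolding VG_def Vc_def c1 by blast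
  obtain f2 where f2: "bij f2" "sren s2 = (\<lambda>x. Var (f2 x))"
    and disj2: "vars_g (sgoal s2) \<inter> f2 ` Vc = {}"
    using valid_step_renaming_apart[OF v2] unfolding Vc_def cl[symmetric] c1 by blast
  define V where "V = VG \<union> f1 ` Vc"
  (* u transports the selected atom of s1 and the renamed clause of s1 to those of s2. *)
  define u where "u x = (if x \<in> f1 ` Vc then Var (f2 (inv f1 x)) else \<sigma> x)" for x
  note u = subst_merge_renamed_copy[OF f1(1) f2(1) disj1 u_def]
  obtain a p where ap: "sel (sgoal s1) = (a, p)"
    by (cases "sel (sgoal s1)")
  have a_vars: "vars_a a \<subseteq> VG"
    using sel_least(1)[OF valid_stepD(1,2)[OF v1]] ap unfolding VG_def vars_g_def by force
  have hd_vars: "vars_a (subst_a (sren s1) hd) = f1 ` vars_a hd"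
    by (auto simp: f1(2) vars_a_subst)
  have "subst_a u a = subst_a \<sigma> a"
    using a_vars u(1) by (auto intro: subst_a_cong)
  moreover have "subst_a u (subst_a (sren s1) hd) = subst_a (sren s2) hd"
    using u(2) unfolding subst_a_comp f2(2)
    by (intro subst_a_cong) (simp add: scomp_def f1(2) Vc_def vars_c_def)
  ultimately have r2: "relevant_mgu (smgu s2) (subst_a u a) (subst_a u (subst_a (sren s1) hd))"
    using valid_stepD(6)[OF v2] sel2 ap c1 unfolding cl[symmetric] by simp
  have "relevant_mgu (smgu s1) a (subst_a (sren s1) hd)"
    using valid_stepD(6)[OF v1] ap c1 by simp
  moreover note r2
  moreover have "finite V"
    using valid_stepD(1,3)[OF v1] c1
    unfolding V_def VG_def Vc_def vars_c_def pgoal_def by (simp add: finite_vars_g)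
  moreover have "vars_a a \<union> vars_a (subst_a (sren s1) hd) \<subseteq> V"
    using a_vars hd_vars unfolding V_def Vc_def vars_c_def by auto
  ultimately obtain \<delta> where \<delta>: "\<forall>x\<in>V. subst_t \<delta> (smgu s1 x) = subst_t (smgu s2) (u x)"
    and ren: "(\<exists>m. inj_on m V \<and> (\<forall>x\<in>V. u x = Var (m x))) \<longrightarrow> renaming \<delta>"
    by (metis relevant_mgu_instance)
  have "(\<Union>x\<in>VG. vars_t (\<sigma> x)) \<inter> f2 ` Vc = {}"
    using vars2 disj2 unfolding VG_def vars_g_gsubst by blast
  then have "renaming \<sigma> \<Longrightarrow> \<exists>m. inj_on m V \<and> (\<forall>x\<in>V. u x = Var (m x))"
    unfolding V_def by (rule u(3)[rotated])
  then have "renaming \<sigma> \<Longrightarrow> renaming \<delta>"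
    using ren by blast
  moreover have "\<forall>x\<in>VG. subst_t \<delta> (smgu s1 x) = subst_t (smgu s2) (\<sigma> x)"
    using \<delta> u(1) unfolding V_def by simp
  moreover have "B \<cdot>\<^sub>s sren s1 \<cdot>\<^sub>s smgu s1 \<cdot>\<^sub>s \<delta> = B \<cdot>\<^sub>s sren s2 \<cdot>\<^sub>s smgu s2"
    unfolding gsubst_comp
  proof (rule gsubst_cong)
    fix y assume "y \<in> vars_g B"
    then have "y \<in> Vc" "f1 y \<in> V"
      unfolding Vc_def V_def vars_c_def by auto
    then show "scomp (scomp (sren s1) (smgu s1)) \<delta> y = scomp (sren s2) (smgu s2) y"
      using \<delta> u(2) by (simp add: scomp_def f1(2) f2(2))
  qed
  ultimately show ?thesis
    using that c1 unfolding VG_def by simp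
qed

lemma step_sub_lowering_instance:
  fixes S :: "('f,'v) step set"
  assumes sis: "sis_rule S" and s1S: "s1 \<in> S" and s2S: "s2 \<in> S"
    and cl: "sclause s1 = sclause s2" and sh: "shifting \<rho>"
    and g2: "sgoal s2 = sgoal s1 \<cdot>\<^sub>s \<sigma> \<cdot>\<^sub>p \<rho> \<union> Y"
    and disj: "prios (sgoal s1 \<cdot>\<^sub>s \<sigma> \<cdot>\<^sub>p \<rho>) \<inter> prios Y = {}"
    and sel_in: "sel (sgoal s2) \<in> sgoal s1 \<cdot>\<^sub>s \<sigma> \<cdot>\<^sub>p \<rho>"
  obtains \<delta> \<rho>' where "shifting \<rho>'"
    "step_sub s2 (sgoal s1 \<cdot>\<^sub>s \<sigma> \<cdot>\<^sub>p \<rho>) = result s1 \<cdot>\<^sub>s \<delta> \<cdot>\<^sub>p \<rho>'"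
    "renaming \<sigma> \<Longrightarrow> renaming \<delta>"
proof -
  have v1: "valid_step s1" and v2: "valid_step s2"
    using sis_rule_valid_step sis s1S s2S by auto
  define G1 where "G1 = sgoal s1"
  define K where "K = G1 - {sel G1}"
  define B where "B = snd (sclause s1)"
  have G1: "pgoal G1" "G1 \<noteq> {}" "sel G1 \<in> G1"
    using valid_stepD(1,2)[OF v1] sel_least(1) unfolding G1_def by auto
  have "strict_mono \<rho>"
    using sh unfolding shifting_def by simp
  have sel2: "sel (sgoal s2) = (subst_a \<sigma> (fst (sel G1)), \<rho> (snd (sel G1)))"
    using sel_Un_gsubst_gshift[OF _ _ G1(1,2) \<open>strict_mono \<rho>\<close>] valid_stepD(1)[OF v2] g2 sel_in
    unfolding G1_def by simp
  have "lowering_cond Y s1 s2 \<sigma> \<rho>"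
    unfolding lowering_cond_def using v1 v2 cl sh disj g2 sel2 by (simp add: G1_def)
  then obtain \<rho>' where "shifting \<rho>'" and K_shift: "K \<cdot>\<^sub>p \<rho>' = K \<cdot>\<^sub>p \<rho>"
    and B_shift: "B \<cdot>\<^sub>p sshift s1 \<cdot>\<^sub>p \<rho>' = B \<cdot>\<^sub>p sshift s2"
    using spec_indep_lowering_shift sis s1S s2S unfolding sis_rule_def K_def G1_def B_def by metis
  have "vars_g (G1 \<cdot>\<^sub>s \<sigma>) \<subseteq> vars_g (sgoal s2)"
    using g2 vars_g_gshift[of "G1 \<cdot>\<^sub>s \<sigma>" \<rho>] unfolding G1_def by auto
  then obtain \<delta> where \<delta>_goal: "\<forall>x\<in>vars_g G1. subst_t \<delta> (smgu s1 x) = subst_t (smgu s2) (\<sigma> x)"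
    and \<delta>_body: "B \<cdot>\<^sub>s sren s1 \<cdot>\<^sub>s smgu s1 \<cdot>\<^sub>s \<delta> = B \<cdot>\<^sub>s sren s2 \<cdot>\<^sub>s smgu s2"
    and "renaming \<sigma> \<Longrightarrow> renaming \<delta>"
    using step_mgu_instance[OF v1 v2 cl] sel2 unfolding G1_def B_def by auto
  have "K \<cdot>\<^sub>s smgu s1 \<cdot>\<^sub>s \<delta> = K \<cdot>\<^sub>s \<sigma> \<cdot>\<^sub>s smgu s2"
    unfolding gsubst_comp
    using \<delta>_goal vars_g_mono[of K G1] by (intro gsubst_cong) (auto simp: K_def scomp_def)
  then have "K \<cdot>\<^sub>s smgu s1 \<cdot>\<^sub>s \<delta> \<cdot>\<^sub>p \<rho>' = K \<cdot>\<^sub>s \<sigma> \<cdot>\<^sub>p \<rho> \<cdot>\<^sub>s smgu s2"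
    using K_shift by (metis gsubst_gshift)
  moreover have "B \<cdot>\<^sub>s sren s1 \<cdot>\<^sub>p sshift s1 \<cdot>\<^sub>s smgu s1 \<cdot>\<^sub>s \<delta> \<cdot>\<^sub>p \<rho>'
      = B \<cdot>\<^sub>s sren s2 \<cdot>\<^sub>p sshift s2 \<cdot>\<^sub>s smgu s2"
    using B_shift \<delta>_body by (metis gsubst_gshift)
  ultimately have "step_sub s2 (G1 \<cdot>\<^sub>s \<sigma> \<cdot>\<^sub>p \<rho>) = result s1 \<cdot>\<^sub>s \<delta> \<cdot>\<^sub>p \<rho>'"
    using step_sub_selected[OF sel2 _ G1(1) \<open>strict_mono \<rho>\<close>] G1(3) cl
    unfolding result_def gsubst_Un gshift_Un K_def B_def G1_def by simp
  then show ?thesis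
    using that \<open>shifting \<rho>'\<close> \<open>renaming \<sigma> \<Longrightarrow> renaming \<delta>\<close> unfolding G1_def by blast
qed

section \<open>Sub-resolvents along a derivation\<close>

lemma result_eq_step_sub_Un:
  assumes "valid_step s" "sgoal s = A \<union> B"
  shows "result s = step_sub s A \<union> step_sub s B"
proof -
  define z where "z = sel (sgoal s)"
  define Bd where "Bd = snd (sclause s) \<cdot>\<^sub>s sren s \<cdot>\<^sub>p sshift s"
  have "z \<in> A \<union> B"
    using sel_least(1)[OF valid_stepD(1,2)[OF assms(1)]] assms(2) z_def by simp
  then have "(A \<union> B) - {z} \<union> Bd
      = (A - {z} \<union> (if z \<in> A then Bd else {})) \<union> (B - {z} \<union> (if z \<in> B then Bd else {}))"
    by auto
  moreover have "step_sub s C = (C - {z} \<union> (if z \<in> C then Bd else {})) \<cdot>\<^sub>s smgu s" for C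
    unfolding step_sub_def z_def Bd_def by (simp add: gsubst_Un)
  ultimately show ?thesis
    unfolding result_def assms(2)[symmetric] z_def[symmetric] Bd_def[symmetric]
    by (simp add: assms(2) gsubst_Un)
qed

lemma prios_step_sub_disjoint:
  assumes "valid_step s" "sgoal s = A \<union> B" "prios A \<inter> prios B = {}"
  shows "prios (step_sub s A) \<inter> prios (step_sub s B) = {}"
proof -
  define z where "z = sel (sgoal s)"
  define P where "P = prios (snd (sclause s) \<cdot>\<^sub>s sren s \<cdot>\<^sub>p sshift s)"
  have "z \<in> A \<union> B"
    using sel_least(1)[OF valid_stepD(1,2)[OF assms(1)]] assms(2) z_def by simp
  moreover have "z \<in> A \<Longrightarrow> z \<notin> B"
    using assms(3) unfolding prios_def by auto
  moreover have "P \<inter> prios (A - {z}) = {}" "P \<inter> prios (B - {z}) = {}"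
    using valid_stepD(8)[OF assms(1)] prios_mono[of "A - {z}" "sgoal s - {z}"]
      prios_mono[of "B - {z}" "sgoal s - {z}"] assms(2) unfolding z_def P_def by auto
  moreover have "prios (A - {z}) \<inter> prios (B - {z}) = {}"
    using assms(3) prios_mono[of "A - {z}" A] prios_mono[of "B - {z}" B] by auto
  moreover have "prios (step_sub s C) = prios (C - {z}) \<union> (if z \<in> C then P else {})" for C
    unfolding step_sub_def z_def P_def by (auto simp: gsubst_gshift)
  ultimately show ?thesis
    by auto
qed

lemma subres_instance:
  fixes S :: "('f,'v) step set"
  assumes sis: "sis_rule S"
  shows "chain (F \<union> Y) ds2 R \<Longrightarrow> set ds2 \<subseteq> S \<Longrightarrow> prios F \<inter> prios Y = {} \<Longrightarrow>
    F = G \<cdot>\<^sub>s \<sigma> \<cdot>\<^sub>p \<rho> \<Longrightarrow> shifting \<rho> \<Longrightarrow> chain G ds1 Q \<Longrightarrow> set ds1 \<subseteq> S \<Longrightarrow>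
    subtempl ds2 F = map sclause ds1 \<Longrightarrow>
    \<exists>\<sigma>' \<rho>'. shifting \<rho>' \<and> subres ds2 F = Q \<cdot>\<^sub>s \<sigma>' \<cdot>\<^sub>p \<rho>' \<and>
      (renaming \<sigma> \<and> subtempl ds2 Y = [] \<longrightarrow> renaming \<sigma>')"
proof (induction ds2 arbitrary: F Y G ds1 \<sigma> \<rho>)
  case Nil
  then show ?case
    by auto
next
  case (Cons s2 ds2)
  have v2: "valid_step s2" and g2: "sgoal s2 = F \<union> Y" and "s2 \<in> S" "set ds2 \<subseteq> S"
    using Cons.prems(1,2) by auto
  then have rest: "chain (step_sub s2 F \<union> step_sub s2 Y) ds2 R" "set ds2 \<subseteq> S"
    using Cons.prems(1) result_eq_step_sub_Un[OF v2 g2] by auto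
  have disj: "prios (step_sub s2 F) \<inter> prios (step_sub s2 Y) = {}"
    by (rule prios_step_sub_disjoint[OF v2 g2 Cons.prems(3)])
  show ?case
  proof (cases "sel (sgoal s2) \<in> F")
    case False
    have "step_sub s2 F = G \<cdot>\<^sub>s scomp \<sigma> (smgu s2) \<cdot>\<^sub>p \<rho>"
      using False Cons.prems(4) unfolding step_sub_def by (simp add: gsubst_gshift[symmetric] gsubst_comp)
    moreover have "subtempl ds2 (step_sub s2 F) = map sclause ds1"
      using Cons.prems(8) False by simp
    ultimately obtain \<sigma>' \<rho>' where "shifting \<rho>'" "subres ds2 (step_sub s2 F) = Q \<cdot>\<^sub>s \<sigma>' \<cdot>\<^sub>p \<rho>'"
      using Cons.IH[OF rest disj _ Cons.prems(5-7)] by blast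
    moreover have "subtempl (s2 # ds2) Y \<noteq> []"
      using False g2 sel_least(1)[OF valid_stepD(1,2)[OF v2]] by auto
    ultimately show ?thesis
      by auto
  next
    case True
    then have "sel (sgoal s2) \<notin> Y"
      using Cons.prems(3) unfolding prios_def by auto
    obtain s1 ds1' where ds1: "ds1 = s1 # ds1'" and cl: "sclause s1 = sclause s2"
      and templ: "subtempl ds2 (step_sub s2 F) = map sclause ds1'"
      using Cons.prems(8) True by (cases ds1) auto
    have g1: "sgoal s1 = G" and "s1 \<in> S" and rest1: "chain (result s1) ds1' Q" "set ds1' \<subseteq> S"
      using Cons.prems(6,7) ds1 by auto
    obtain \<delta> \<rho>' where "shifting \<rho>'" "step_sub s2 F = result s1 \<cdot>\<^sub>s \<delta> \<cdot>\<^sub>p \<rho>'"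
      and "renaming \<sigma> \<Longrightarrow> renaming \<delta>"
      using step_sub_lowering_instance[OF sis \<open>s1 \<in> S\<close> \<open>s2 \<in> S\<close> cl Cons.prems(5)] g2
        Cons.prems(3,4) True g1 by metis
    then obtain \<sigma>' \<rho>'' where "shifting \<rho>''" "subres ds2 (step_sub s2 F) = Q \<cdot>\<^sub>s \<sigma>' \<cdot>\<^sub>p \<rho>''"
      "renaming \<delta> \<and> subtempl ds2 (step_sub s2 Y) = [] \<longrightarrow> renaming \<sigma>'"
      using Cons.IH[OF rest disj _ _ rest1 templ] by blast
    then show ?thesis
      using \<open>sel (sgoal s2) \<notin> Y\<close> \<open>renaming \<sigma> \<Longrightarrow> renaming \<delta>\<close> by auto
  qed
qed

theorem lemmaL3p1p1:
  fixes S :: "('f,'v) step set"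
    and G X Q R :: "('f,'v) pgoal"
    and \<gamma> :: "('f,'v) subst"
    and \<tau> :: "rat \<Rightarrow> rat"
    and ds1 ds2 :: "('f,'v) step list"
    and E D :: "('f,'v) clause list"
  assumes "infinite (UNIV :: 'v set)"
    and "sis_rule S"
    and "pgoal G" and "pgoal X" and "shifting \<tau>"
    and "prios (G \<cdot>\<^sub>s \<gamma> \<cdot>\<^sub>p \<tau>) \<inter> prios X = {}"
    and "pderiv S G ds1 E Q"
    and "pderiv S (G \<cdot>\<^sub>s \<gamma> \<cdot>\<^sub>p \<tau> \<union> X) ds2 D R"
    and "subtempl ds2 (G \<cdot>\<^sub>s \<gamma> \<cdot>\<^sub>p \<tau>) = E"
  shows "\<exists>\<sigma> \<rho>. shifting \<rho> \<and> subres ds2 (G \<cdot>\<^sub>s \<gamma> \<cdot>\<^sub>p \<tau>) = Q \<cdot>\<^sub>s \<sigma> \<cdot>\<^sub>p \<rho> \<and>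
           (renaming \<gamma> \<and> subtempl ds2 X = [] \<longrightarrow> renaming \<sigma>)"
proof -
  have "chain G ds1 Q" "set ds1 \<subseteq> S" "map sclause ds1 = E"
    using assms(7) unfolding pderiv_def by auto
  moreover have "chain (G \<cdot>\<^sub>s \<gamma> \<cdot>\<^sub>p \<tau> \<union> X) ds2 R" "set ds2 \<subseteq> S"
    using assms(8) unfolding pderiv_def by auto
  ultimately show ?thesis
    using subres_instance[OF assms(2)] assms(5,6,9) by blast
qed

end
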